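(* Let $\rho = (\mathcal{V}, V, \mathbf{1}, \mathrm{var}, \mathrm{low}, \mathrm{high}, \mathrm{flip})$ be a COBDD with $\mathcal V=\{x_1,\dots,x_n\}$, let $v_1, \ldots, v_r \in V$ be nodes and $b_1, \ldots, b_r \in \mathbb{B}$ flipping bits. Then the node-translation part of GenerateCCode$(\rho, v_1, b_1, \ldots, v_r, b_r)$ (namely: $W:=\emptyset$, then for $i=1,\dots,r$, $W :=$ Translate$(\rho, v_i, W)$) generates a sequence of labeled C statements $B_1 \ldots B_k$ such that $k = |\bigcup_{i=1}^r V_{v_i}|$ and for all $v \in \bigcup_{i=1}^r V_{v_i}$: (1) the label L_$v$ occurs in $B_j$ for some $j$; and (2) for every $b\in\mathbb B$, if execution is started at label L_$v$ with x[$j-1$] $= x_j$ for all $j \in\{1,\dots,n\}$ and ret_b $= \bar b$, then a statement "return ret_b;" is executed within $O(p)$ steps, with ret_b $= [\![ v, b]\!]$ evaluated at $(x_1,\dots,x_n)$, where $p = \mathrm{height}(v)$.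
   Context: $\mathbb{B}=\{0,1\}$. A COBDD is a tuple $\rho = (\mathcal{V}, V, \mathbf{1}, \mathrm{var}, \mathrm{low}, \mathrm{high}, \mathrm{flip})$ with $\mathcal V$ a finite totally ordered set of boolean variables, $V$ a finite set of nodes, $\mathbf 1\in V$ the terminal node, $\mathrm{var}: V\setminus\{\mathbf 1\}\to\mathcal V$, $\mathrm{high},\mathrm{low}: V\setminus\{\mathbf 1\}\to V$, $\mathrm{flip}: V\setminus\{\mathbf 1\}\to\mathbb B$, with variables strictly increasing along edges $v\to\mathrm{high}(v)$ and $v\to\mathrm{low}(v)$; COBDDs are assumed reduced (no internal $v$ with $\mathrm{low}(v)=\mathrm{high}(v)$ and $\mathrm{flip}(v)=0$, no two distinct nodes with isomorphic reachable sub-COBDDs). $V_v$ is the set of nodes reachable from $v$ (including $v$); $\mathrm{height}(v)$ is the length of the longest path from $v$ to $\mathbf 1$. Semantics: $[\![ \mathbf 1, b]\!] := \bar b$ and, for internal $v$ with $\mathrm{var}(v)=x_i$, $[\![ v,b]\!] := x_i [\![ \mathrm{high}(v), b]\!] + \bar x_i [\![ \mathrm{low}(v), b\oplus \mathrm{flip}(v)]\!]$. The procedure Translate$(\rho,v,W)$: if $v\in W$, return $W$ (printing nothing); otherwise set $W := W\cup\{v\}$; print the label "L_$v$:"; if $v=\mathbf 1$, print "return ret_b;"; otherwise, with $i$ such that $\mathrm{var}(v)=x_i$, print "if (x[$i-1$] == 1) goto L_$\mathrm{high}(v)$;" followed by "else {ret_b = !ret_b; goto L_$\mathrm{low}(v)$;}"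 if $\mathrm{flip}(v)=1$ or "else goto L_$\mathrm{low}(v)$;" if $\mathrm{flip}(v)=0$, then set $W:=$ Translate$(\rho,\mathrm{high}(v),W)$ and then $W:=$ Translate$(\rho,\mathrm{low}(v),W)$; return $W$. Each node has a unique label L_$v$. Steps are counted as executed C statements. *)

theory Defs
  imports Main
begin

text \<open>Variables x_1,...,x_n are represented by their indices 1..n (ordered as nat).  The maps var, low, high, flip are only
  meaningful on internal nodes (nodes different from the terminal).\<close>

record 'n cobdd =
  nodes :: "'n set"
  one   :: 'n
  var   :: "'n \<Rightarrow> nat"
  low   :: "'n \<Rightarrow> 'n"
  high  :: "'n \<Rightarrow> 'n"
  flip  :: "'n \<Rightarrow> bool"

definition edges :: "'n cobdd \<Rightarrow> ('n \<times> 'n) set" where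
  "edges \<rho> = {(v, w). v \<in> nodes \<rho> \<and> v \<noteq> one \<rho> \<and> (w = high \<rho> v \<or> w = low \<rho> v)}"

definition reach :: "'n cobdd \<Rightarrow> 'n \<Rightarrow> 'n set" where
  "reach \<rho> v = {w. (v, w) \<in> (edges \<rho>)\<^sup>*}"

definition sub_iso :: "'n cobdd \<Rightarrow> 'n \<Rightarrow> 'n \<Rightarrow> bool" where
  "sub_iso \<rho> u w \<longleftrightarrow> (\<exists>f. bij_betw f (reach \<rho> u) (reach \<rho> w) \<and> f u = w \<and>
     (\<forall>z \<in> reach \<rho> u. (z = one \<rho> \<longleftrightarrow> f z = one \<rho>) \<and>
        (z \<noteq> one \<rho> \<longrightarrow> var \<rho> (f z) = var \<rho> z \<and> high \<rho> (f z) = f (high \<rho> z)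
            \<and> low \<rho> (f z) = f (low \<rho> z) \<and> flip \<rho> (f z) = flip \<rho> z)))"

definition is_cobdd :: "nat \<Rightarrow> 'n cobdd \<Rightarrow> bool" where
  "is_cobdd n \<rho> \<longleftrightarrow>
     finite (nodes \<rho>) \<and> one \<rho> \<in> nodes \<rho> \<and>
     (\<forall>v \<in> nodes \<rho> - {one \<rho>}.
        var \<rho> v \<in> {1..n} \<and> high \<rho> v \<in> nodes \<rho> \<and> low \<rho> v \<in> nodes \<rho> \<and>
        (high \<rho> v \<noteq> one \<rho> \<longrightarrow> var \<rho> v < var \<rho> (high \<rho> v)) \<and>
        (low \<rho> v \<noteq> one \<rho> \<longrightarrow> var \<rho> v < var \<rho> (low \<rho> v)))"

definition reduced :: "'n cobdd \<Rightarrow> bool" where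
  "reduced \<rho> \<longleftrightarrow>
     (\<forall>v \<in> nodes \<rho> - {one \<rho>}. \<not> (low \<rho> v = high \<rho> v \<and> \<not> flip \<rho> v)) \<and>
     (\<forall>u \<in> nodes \<rho>. \<forall>w \<in> nodes \<rho>. u \<noteq> w \<longrightarrow> \<not> sub_iso \<rho> u w)"

inductive path_len :: "'n cobdd \<Rightarrow> 'n \<Rightarrow> nat \<Rightarrow> bool" for \<rho> where
  "path_len \<rho> (one \<rho>) 0"
| "v \<noteq> one \<rho> \<Longrightarrow> path_len \<rho> (high \<rho> v) k \<Longrightarrow> path_len \<rho> v (Suc k)"
| "v \<noteq> one \<rho> \<Longrightarrow> path_len \<rho> (low \<rho> v) k \<Longrightarrow> path_len \<rho> v (Suc k)"

definition height :: "'n cobdd \<Rightarrow> 'n \<Rightarrow> nat" where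
  "height \<rho> v = Max {k. path_len \<rho> v k}"

text \<open>Semantics [[v, b]] evaluated at the assignment xs (xs j = value of x_j):
  sem \<rho> xs v b r means [[v,b]](xs) = r.\<close>
inductive sem :: "'n cobdd \<Rightarrow> (nat \<Rightarrow> bool) \<Rightarrow> 'n \<Rightarrow> bool \<Rightarrow> bool \<Rightarrow> bool"
  for \<rho> xs where
  "sem \<rho> xs (one \<rho>) b (\<not> b)"
| "v \<noteq> one \<rho> \<Longrightarrow> xs (var \<rho> v) \<Longrightarrow> sem \<rho> xs (high \<rho> v) b r \<Longrightarrow> sem \<rho> xs v b r"
| "v \<noteq> one \<rho> \<Longrightarrow> \<not> xs (var \<rho> v) \<Longrightarrow> sem \<rho> xs (low \<rho> v) (b \<noteq> flip \<rho> v) r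
     \<Longrightarrow> sem \<rho> xs v b r"

text \<open>The C statement printed after label L_v:
  CReturn: "return ret_b;"
  CIf i h f l: "if (x[i] == 1) goto L_h; else goto L_l;" (f = False) or
               "if (x[i] == 1) goto L_h; else {ret_b = !ret_b; goto L_l;}" (f = True).
  A labeled block is a pair (v, statement), standing for "L_v: statement".\<close>
datatype 'n cstmt = CReturn | CIf nat 'n bool 'n

type_synonym 'n block = "'n \<times> 'n cstmt"

text \<open>Translate(\<rho>, v, W): translate \<rho> v W out W' means the call prints the
  block sequence out and returns W'.\<close>
inductive translate :: "'n cobdd \<Rightarrow> 'n \<Rightarrow> 'n set \<Rightarrow> 'n block list \<Rightarrow> 'n set \<Rightarrow> bool"
  for \<rho> where
  visited: "v \<in> W \<Longrightarrow> translate \<rho> v W [] W"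
| terminal: "v \<notin> W \<Longrightarrow> v = one \<rho> \<Longrightarrow> translate \<rho> v W [(v, CReturn)] (insert v W)"
| internal: "v \<notin> W \<Longrightarrow> v \<noteq> one \<rho> \<Longrightarrow>
     translate \<rho> (high \<rho> v) (insert v W) out1 W1 \<Longrightarrow>
     translate \<rho> (low \<rho> v) W1 out2 W2 \<Longrightarrow>
     translate \<rho> v W ((v, CIf (var \<rho> v - 1) (high \<rho> v) (flip \<rho> v) (low \<rho> v)) # out1 @ out2) W2"

inductive translate_all :: "'n cobdd \<Rightarrow> 'n list \<Rightarrow> 'n set \<Rightarrow> 'n block list \<Rightarrow> 'n set \<Rightarrow> bool"
  for \<rho> where
  "translate_all \<rho> [] W [] W"
| "translate \<rho> v W out1 W1 \<Longrightarrow> translate_all \<rho> vs W1 out2 W2 \<Longrightarrow>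
     translate_all \<rho> (v # vs) W (out1 @ out2) W2"

text \<open>Execution of the generated code, started at label L_v with the C array
  arr (arr i = x[i]) and ret_b = r.  exec prog arr v r k r' means: a statement
  "return ret_b;" is executed after exactly k executed C statements, with
  ret_b = r' at that moment.  Statement counting: "return" = 1;
  if-statement = 1, each goto = 1, the assignment ret_b = !ret_b = 1.
  Jumps go to the block carrying the label (map_of finds it).\<close>
inductive exec :: "'n block list \<Rightarrow> (nat \<Rightarrow> bool) \<Rightarrow> 'n \<Rightarrow> bool \<Rightarrow> nat \<Rightarrow> bool \<Rightarrow> bool"
  for prog arr where
  "map_of prog v = Some CReturn \<Longrightarrow> exec prog arr v r 1 r"
| "map_of prog v = Some (CIf i h f l) \<Longrightarrow> arr i \<Longrightarrow> exec prog arr h r k r'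
     \<Longrightarrow> exec prog arr v r (k + 2) r'"
| "map_of prog v = Some (CIf i h f l) \<Longrightarrow> \<not> arr i \<Longrightarrow> exec prog arr l (r \<noteq> f) k r'
     \<Longrightarrow> exec prog arr v r (k + (if f then 3 else 2)) r'"

end

theory Submission
  imports Defs
begin

text \<open>Translation is a depth-first traversal that prints each reachable node exactly once, the
  block of u jumping to the blocks of high u and low u; since the traversal only stops at visited
  nodes, the printed labels are closed under successors and thus are exactly the reachable nodes.
  Running the code from L_v then follows the path of the COBDD chosen by the input, spending at
  most three statements per edge and one for the final return, while ret_b tracks the flipping bit
  of the semantics (started as the complement of b).  Variable indices strictly increase along
  edges, so all paths are shorter than n + 1 and the height is well defined.\<close>

definition block_of :: "'n cobdd \<Rightarrow> 'n \<Rightarrow> 'n cstmt" where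
  "block_of \<rho> u = (if u = one \<rho> then CReturn
     else CIf (var \<rho> u - 1) (high \<rho> u) (flip \<rho> u) (low \<rho> u))"

definition rank :: "nat \<Rightarrow> 'n cobdd \<Rightarrow> 'n \<Rightarrow> nat" where
  "rank n \<rho> v = (if v = one \<rho> then 0 else Suc n - var \<rho> v)"

lemma
  assumes "is_cobdd n \<rho>" "v \<in> nodes \<rho>" "v \<noteq> one \<rho>"
  shows high_in_nodes: "high \<rho> v \<in> nodes \<rho>"
    and low_in_nodes: "low \<rho> v \<in> nodes \<rho>"
    and rank_high_less: "rank n \<rho> (high \<rho> v) < rank n \<rho> v"
    and rank_low_less: "rank n \<rho> (low \<rho> v) < rank n \<rho> v"
proof -
  have v: "var \<rho> v \<in> {1..n}" "high \<rho> v \<in> nodes \<rho>" "low \<rho> v \<in> nodes \<rho>"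
    "high \<rho> v \<noteq> one \<rho> \<longrightarrow> var \<rho> v < var \<rho> (high \<rho> v)"
    "low \<rho> v \<noteq> one \<rho> \<longrightarrow> var \<rho> v < var \<rho> (low \<rho> v)"
    using assms unfolding is_cobdd_def by blast+
  moreover have "high \<rho> v \<noteq> one \<rho> \<longrightarrow> var \<rho> (high \<rho> v) \<in> {1..n}"
    "low \<rho> v \<noteq> one \<rho> \<longrightarrow> var \<rho> (low \<rho> v) \<in> {1..n}"
    using assms(1) v(2,3) unfolding is_cobdd_def by blast+
  ultimately show "high \<rho> v \<in> nodes \<rho>" "low \<rho> v \<in> nodes \<rho>"
    "rank n \<rho> (high \<rho> v) < rank n \<rho> v" "rank n \<rho> (low \<rho> v) < rank n \<rho> v"
    using assms(3) unfolding rank_def by auto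
qed

lemma reach_self [simp]: "v \<in> reach \<rho> v"
  by (simp add: reach_def)

lemma reach_closed_subset:
  assumes "v \<in> W" "\<forall>u \<in> W. u \<noteq> one \<rho> \<longrightarrow> high \<rho> u \<in> W \<and> low \<rho> u \<in> W"
  shows "reach \<rho> v \<subseteq> W"
proof
  fix w assume "w \<in> reach \<rho> v"
  then have "(v, w) \<in> (edges \<rho>)\<^sup>*" by (simp add: reach_def)
  then show "w \<in> W"
    by (induction rule: rtrancl_induct) (use assms in \<open>auto simp: edges_def\<close>)
qed

lemma reach_subset_nodes:
  assumes "is_cobdd n \<rho>" "v \<in> nodes \<rho>"
  shows "reach \<rho> v \<subseteq> nodes \<rho>"
proof (rule reach_closed_subset)
  show "\<forall>u \<in> nodes \<rho>. u \<noteq> one \<rho> \<longrightarrow> high \<rho> u \<in> nodes \<rho> \<and> low \<rho> u \<in> nodes \<rho>"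
    using high_in_nodes[OF assms(1)] low_in_nodes[OF assms(1)] by blast
qed (rule assms(2))

lemma reach_succ_subset:
  assumes "v \<in> nodes \<rho>" "v \<noteq> one \<rho>"
  shows "reach \<rho> (high \<rho> v) \<subseteq> reach \<rho> v" "reach \<rho> (low \<rho> v) \<subseteq> reach \<rho> v"
proof -
  have "(v, high \<rho> v) \<in> edges \<rho>" "(v, low \<rho> v) \<in> edges \<rho>"
    using assms by (auto simp: edges_def)
  then show "reach \<rho> (high \<rho> v) \<subseteq> reach \<rho> v" "reach \<rho> (low \<rho> v) \<subseteq> reach \<rho> v"
    by (auto simp: reach_def intro: converse_rtrancl_into_rtrancl)
qed

definition emits :: "'n cobdd \<Rightarrow> 'n set \<Rightarrow> 'n block list \<Rightarrow> 'n set \<Rightarrow> bool" where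
  "emits \<rho> W out W' \<longleftrightarrow> W \<subseteq> W' \<and> distinct (map fst out) \<and> set (map fst out) = W' - W \<and>
     (\<forall>(u, s) \<in> set out. s = block_of \<rho> u) \<and>
     (\<forall>u \<in> W' - W. u \<noteq> one \<rho> \<longrightarrow> high \<rho> u \<in> W' \<and> low \<rho> u \<in> W')"

lemma emits_Nil: "emits \<rho> W [] W"
  by (simp add: emits_def)

lemma emits_append:
  assumes "emits \<rho> W out1 W1" "emits \<rho> W1 out2 W2"
  shows "emits \<rho> W (out1 @ out2) W2"
proof -
  have sub: "W \<subseteq> W1" "W1 \<subseteq> W2"
    and labels: "set (map fst out1) = W1 - W" "set (map fst out2) = W2 - W1"
    and distinct: "distinct (map fst out1)" "distinct (map fst out2)"
    and blocks: "\<forall>(u, s) \<in> set out1. s = block_of \<rho> u" "\<forall>(u, s) \<in> set out2. s = block_of \<rho> u"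
    and closed: "\<forall>u \<in> W1 - W. u \<noteq> one \<rho> \<longrightarrow> high \<rho> u \<in> W1 \<and> low \<rho> u \<in> W1"
      "\<forall>u \<in> W2 - W1. u \<noteq> one \<rho> \<longrightarrow> high \<rho> u \<in> W2 \<and> low \<rho> u \<in> W2"
    using assms unfolding emits_def by blast+
  have "distinct (map fst (out1 @ out2))"
    using distinct labels by auto
  moreover have "set (map fst (out1 @ out2)) = W2 - W"
    using labels sub by auto
  moreover have "\<forall>u \<in> W2 - W. u \<noteq> one \<rho> \<longrightarrow> high \<rho> u \<in> W2 \<and> low \<rho> u \<in> W2"
    using closed sub by blast
  ultimately show ?thesis
    using sub blocks unfolding emits_def by auto
qed

lemma emits_Cons:
  assumes "v \<notin> W" "emits \<rho> (insert v W) out W'"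
    "v \<noteq> one \<rho> \<longrightarrow> high \<rho> v \<in> W' \<and> low \<rho> v \<in> W'"
  shows "emits \<rho> W ((v, block_of \<rho> v) # out) W'"
proof -
  have "insert v W \<subseteq> W'" "set (map fst out) = W' - insert v W"
    using assms(2) unfolding emits_def by blast+
  then show ?thesis
    using assms unfolding emits_def by auto
qed

lemma translate_emits:
  assumes "translate \<rho> v W out W'" "is_cobdd n \<rho>" "v \<in> nodes \<rho>"
  shows "emits \<rho> W out W' \<and> v \<in> W' \<and> W' - W \<subseteq> reach \<rho> v"
  using assms
proof (induction rule: translate.induct)
  case (visited v W)
  then show ?case by (simp add: emits_Nil)
next
  case (terminal v W)
  have "emits \<rho> W [(v, block_of \<rho> v)] (insert v W)"
    using emits_Cons[OF terminal(1) emits_Nil] terminal(2) by blast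
  moreover have "block_of \<rho> v = CReturn"
    using terminal(2) by (simp add: block_of_def)
  ultimately show ?case by auto
next
  case (internal v W out1 W1 out2 W2)
  note succ_nodes = high_in_nodes[OF internal.prems internal.hyps(2)]
    low_in_nodes[OF internal.prems internal.hyps(2)]
  note succ_reach = reach_succ_subset[OF internal.prems(2) internal.hyps(2)]
  have high: "emits \<rho> (insert v W) out1 W1" "high \<rho> v \<in> W1"
    "W1 - insert v W \<subseteq> reach \<rho> (high \<rho> v)"
    using internal.IH(1)[OF internal.prems(1) succ_nodes(1)] by blast+
  have low: "emits \<rho> W1 out2 W2" "low \<rho> v \<in> W2" "W2 - W1 \<subseteq> reach \<rho> (low \<rho> v)"
    using internal.IH(2)[OF internal.prems(1) succ_nodes(2)] by blast+
  have "W1 \<subseteq> W2" "insert v W \<subseteq> W1"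
    using high(1) low(1) unfolding emits_def by blast+
  then have "emits \<rho> W ((v, block_of \<rho> v) # out1 @ out2) W2"
    using internal.hyps(1) emits_append[OF high(1) low(1)] high(2) low(2)
    by (intro emits_Cons) blast+
  moreover have "W2 - W \<subseteq> reach \<rho> v"
    using high(3) low(3) succ_reach reach_self[of v \<rho>] by blast
  moreover have "block_of \<rho> v = CIf (var \<rho> v - 1) (high \<rho> v) (flip \<rho> v) (low \<rho> v)"
    using internal.hyps(2) by (simp add: block_of_def)
  ultimately show ?case
    using \<open>W1 \<subseteq> W2\<close> \<open>insert v W \<subseteq> W1\<close> by auto
qed

lemma translate_all_emits:
  assumes "translate_all \<rho> vs W out W'" "is_cobdd n \<rho>" "set vs \<subseteq> nodes \<rho>"
  shows "emits \<rho> W out W' \<and> set vs \<subseteq> W' \<and> W' - W \<subseteq> (\<Union>v \<in> set vs. reach \<rho> v)"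
  using assms
proof (induction rule: translate_all.induct)
  case (1 W)
  then show ?case by (simp add: emits_Nil)
next
  case (2 v W out1 W1 vs out2 W2)
  have first: "emits \<rho> W out1 W1" "v \<in> W1" "W1 - W \<subseteq> reach \<rho> v"
    using translate_emits[OF 2(1) 2(4)] 2(5) by auto
  have rest: "emits \<rho> W1 out2 W2" "set vs \<subseteq> W2" "W2 - W1 \<subseteq> (\<Union>u \<in> set vs. reach \<rho> u)"
    using 2 by auto
  have "W1 \<subseteq> W2" using rest(1) by (simp add: emits_def)
  then show ?case
    using emits_append[OF first(1) rest(1)] first(2,3) rest(2,3) by auto
qed

lemma translate_exists:
  assumes "is_cobdd n \<rho>" "v \<in> nodes \<rho>"
  shows "\<exists>out W'. translate \<rho> v W out W'"
  using assms(2)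
proof (induction v arbitrary: W rule: measure_induct_rule[where f = "rank n \<rho>"])
  case (less v)
  consider "v \<in> W" | "v \<notin> W" "v = one \<rho>" | "v \<notin> W" "v \<noteq> one \<rho>" by blast
  then show ?case
  proof cases
    case 1
    then show ?thesis by (blast intro: translate.visited)
  next
    case 2
    then show ?thesis by (blast intro: translate.terminal)
  next
    case 3
    obtain out1 W1 where "translate \<rho> (high \<rho> v) (insert v W) out1 W1"
      using less.IH[OF rank_high_less[OF assms(1) less.prems 3(2)]
        high_in_nodes[OF assms(1) less.prems 3(2)]] by blast
    moreover obtain out2 W2 where "translate \<rho> (low \<rho> v) W1 out2 W2"
      using less.IH[OF rank_low_less[OF assms(1) less.prems 3(2)]
        low_in_nodes[OF assms(1) less.prems 3(2)]] by blast
    ultimately show ?thesis using translate.internal[OF 3] by blast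
  qed
qed

lemma translate_all_exists:
  assumes "is_cobdd n \<rho>" "set vs \<subseteq> nodes \<rho>"
  shows "\<exists>out W'. translate_all \<rho> vs W out W'"
  using assms(2)
proof (induction vs arbitrary: W)
  case Nil
  then show ?case using translate_all.intros(1) by blast
next
  case (Cons v vs)
  obtain out1 W1 where "translate \<rho> v W out1 W1"
    using translate_exists[OF assms(1)] Cons.prems by force
  moreover obtain out2 W2 where "translate_all \<rho> vs W1 out2 W2"
    using Cons by force
  ultimately show ?case by (blast intro: translate_all.intros(2))
qed

lemma emits_map_of:
  assumes "emits \<rho> W out W'" "u \<in> W' - W"
  shows "map_of out u = Some (block_of \<rho> u)"
proof -
  obtain s where "(u, s) \<in> set out"
    using assms unfolding emits_def by force
  moreover have "distinct (map fst out)" "\<forall>(u, s) \<in> set out. s = block_of \<rho> u"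
    using assms(1) by (simp_all add: emits_def)
  ultimately show ?thesis by (metis (mono_tags) case_prodD map_of_is_SomeI)
qed

lemma translate_all_code:
  assumes "translate_all \<rho> vs {} prog W" "is_cobdd n \<rho>" "set vs \<subseteq> nodes \<rho>"
  shows "W = (\<Union>v \<in> set vs. reach \<rho> v)" and "set (map fst prog) = W"
    and "length prog = card W" and "\<forall>u \<in> W. map_of prog u = Some (block_of \<rho> u)"
    and "\<forall>u \<in> W. u \<noteq> one \<rho> \<longrightarrow> high \<rho> u \<in> W \<and> low \<rho> u \<in> W"
proof -
  have emits: "emits \<rho> {} prog W" and "set vs \<subseteq> W" "W \<subseteq> (\<Union>v \<in> set vs. reach \<rho> v)"
    using translate_all_emits[OF assms] by auto
  show closed: "\<forall>u \<in> W. u \<noteq> one \<rho> \<longrightarrow> high \<rho> u \<in> W \<and> low \<rho> u \<in> W"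
    using emits by (simp add: emits_def)
  show "W = (\<Union>v \<in> set vs. reach \<rho> v)"
    using reach_closed_subset[OF _ closed] \<open>set vs \<subseteq> W\<close> \<open>W \<subseteq> _\<close> by blast
  show labels: "set (map fst prog) = W"
    using emits by (simp add: emits_def)
  show "length prog = card W"
    using emits distinct_card[of "map fst prog"] labels by (simp add: emits_def)
  show "\<forall>u \<in> W. map_of prog u = Some (block_of \<rho> u)"
    using emits_map_of[OF emits] by blast
qed

lemma path_len_le_rank:
  assumes "path_len \<rho> v k" "is_cobdd n \<rho>" "v \<in> nodes \<rho>"
  shows "k \<le> rank n \<rho> v"
  using assms
proof (induction rule: path_len.induct)
  case 1
  then show ?case by simp
next
  case (2 v k)
  then show ?case
    using rank_high_less[OF 2(4,5,1)] high_in_nodes[OF 2(4,5,1)] by fastforce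
next
  case (3 v k)
  then show ?case
    using rank_low_less[OF 3(4,5,1)] low_in_nodes[OF 3(4,5,1)] by fastforce
qed

lemma path_len_le_height:
  assumes "path_len \<rho> v k" "is_cobdd n \<rho>" "v \<in> nodes \<rho>"
  shows "k \<le> height \<rho> v"
proof -
  have "{k. path_len \<rho> v k} \<subseteq> {..rank n \<rho> v}"
    using path_len_le_rank[OF _ assms(2,3)] by auto
  then have "finite {k. path_len \<rho> v k}"
    using finite_subset by blast
  then show ?thesis
    unfolding height_def using assms(1) by (simp add: Max_ge)
qed

lemma exec_along_path:
  assumes cobdd: "is_cobdd n \<rho>" and "W \<subseteq> nodes \<rho>"
    and closed: "\<forall>u \<in> W. u \<noteq> one \<rho> \<longrightarrow> high \<rho> u \<in> W \<and> low \<rho> u \<in> W"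
    and blocks: "\<forall>u \<in> W. map_of prog u = Some (block_of \<rho> u)"
    and arr: "\<forall>j \<in> {1..n}. arr (j - 1) = xs j"
    and "v \<in> W"
  shows "\<exists>k r' len. exec prog arr v (\<not> b) k r' \<and> sem \<rho> xs v b r'
           \<and> path_len \<rho> v len \<and> k \<le> 3 * len + 1"
  using \<open>v \<in> W\<close>
proof (induction v arbitrary: b rule: measure_induct_rule[where f = "rank n \<rho>"])
  case (less v)
  have v: "v \<in> nodes \<rho>" using \<open>W \<subseteq> nodes \<rho>\<close> less.prems by blast
  show ?case
  proof (cases "v = one \<rho>")
    case True
    then have "map_of prog v = Some CReturn"
      using blocks less.prems by (simp add: block_of_def)
    then have "exec prog arr v (\<not> b) 1 (\<not> b)"
      by (rule exec.intros(1))
    moreover have "sem \<rho> xs v b (\<not> b)" "path_len \<rho> v 0"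
      using True sem.intros(1) path_len.intros(1) by simp_all
    ultimately show ?thesis by fastforce
  next
    case internal: False
    have block: "map_of prog v = Some (CIf (var \<rho> v - 1) (high \<rho> v) (flip \<rho> v) (low \<rho> v))"
      using blocks less.prems internal by (simp add: block_of_def)
    have "var \<rho> v \<in> {1..n}"
      using cobdd v internal unfolding is_cobdd_def by blast
    then have arr_v: "arr (var \<rho> v - 1) = xs (var \<rho> v)"
      using arr by auto
    show ?thesis
    proof (cases "xs (var \<rho> v)")
      case True
      obtain k r' len where IH: "exec prog arr (high \<rho> v) (\<not> b) k r'" "sem \<rho> xs (high \<rho> v) b r'"
        "path_len \<rho> (high \<rho> v) len" "k \<le> 3 * len + 1"
        using less.IH[OF rank_high_less[OF cobdd v internal]] closed less.prems internal by blast
      have "exec prog arr v (\<not> b) (k + 2) r'"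
        using exec.intros(2)[OF block _ IH(1)] arr_v True by simp
      moreover have "sem \<rho> xs v b r'" "path_len \<rho> v (Suc len)"
        using sem.intros(2)[OF internal True IH(2)] path_len.intros(2)[OF internal IH(3)] .
      ultimately show ?thesis using IH(4) by fastforce
    next
      case False
      obtain k r' len where IH: "exec prog arr (low \<rho> v) (b = flip \<rho> v) k r'"
        "sem \<rho> xs (low \<rho> v) (b \<noteq> flip \<rho> v) r'" "path_len \<rho> (low \<rho> v) len" "k \<le> 3 * len + 1"
        using less.IH[OF rank_low_less[OF cobdd v internal], of "b \<noteq> flip \<rho> v"]
          closed less.prems internal by auto
      have "exec prog arr (low \<rho> v) ((\<not> b) \<noteq> flip \<rho> v) k r'"
        using IH(1) by (simp add: eq_commute)
      then have "exec prog arr v (\<not> b) (k + (if flip \<rho> v then 3 else 2)) r'"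
        using exec.intros(3)[OF block] arr_v False by simp
      moreover have "sem \<rho> xs v b r'" "path_len \<rho> v (Suc len)"
        using sem.intros(3)[OF internal False IH(2)] path_len.intros(3)[OF internal IH(3)] .
      ultimately show ?thesis using IH(4) by fastforce
    qed
  qed
qed

lemma translate_all_runs_within_height:
  assumes translated: "translate_all \<rho> vs {} prog W" and cobdd: "is_cobdd n \<rho>"
    and vs: "set vs \<subseteq> nodes \<rho>" and v: "v \<in> (\<Union>u \<in> set vs. reach \<rho> u)"
    and arr: "\<forall>j \<in> {1..n}. arr (j - 1) = xs j"
  shows "\<exists>k r'. exec prog arr v (\<not> b) k r' \<and> k \<le> 3 * (height \<rho> v + 1) \<and> sem \<rho> xs v b r'"
proof -
  note labels = translate_all_code[OF translated cobdd vs]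
  have "W \<subseteq> nodes \<rho>" "v \<in> W"
    using labels(1) reach_subset_nodes[OF cobdd] vs v by blast+
  then obtain k r' len where run: "exec prog arr v (\<not> b) k r'" "sem \<rho> xs v b r'"
    "path_len \<rho> v len" "k \<le> 3 * len + 1"
    using exec_along_path[OF cobdd _ labels(5,4) arr] by blast
  moreover have "len \<le> height \<rho> v"
    using path_len_le_height[OF run(3) cobdd] \<open>W \<subseteq> nodes \<rho>\<close> \<open>v \<in> W\<close> by blast
  ultimately show ?thesis
    by (intro exI[of _ k] exI[of _ r']) simp
qed

lemma translate_all_label_exists:
  assumes "translate_all \<rho> vs {} prog W" "is_cobdd n \<rho>" "set vs \<subseteq> nodes \<rho>"
    and "v \<in> (\<Union>u \<in> set vs. reach \<rho> u)"
  shows "\<exists>j < length prog. fst (prog ! j) = v"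
  using translate_all_code(1,2)[OF assms(1-3)] assms(4)
  by (metis in_set_conv_nth length_map nth_map)

theorem lemma4:
  shows "\<exists>c::nat. \<forall>(n::nat) (\<rho>::'n cobdd) (vs::'n list) (bs::bool list).
     is_cobdd n \<rho> \<and> reduced \<rho> \<and> set vs \<subseteq> nodes \<rho> \<and> length bs = length vs \<longrightarrow>
     (\<exists>prog W'. translate_all \<rho> vs {} prog W') \<and>
     (\<forall>prog W'. translate_all \<rho> vs {} prog W' \<longrightarrow>
        length prog = card (\<Union>v \<in> set vs. reach \<rho> v) \<and>
        (\<forall>v \<in> (\<Union>u \<in> set vs. reach \<rho> u).
           (\<exists>j < length prog. fst (prog ! j) = v) \<and>
           (\<forall>b (xs::nat \<Rightarrow> bool) (arr::nat \<Rightarrow> bool).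
              (\<forall>j \<in> {1..n}. arr (j - 1) = xs j) \<longrightarrow>
              (\<exists>k r'. exec prog arr v (\<not> b) k r' \<and> k \<le> c * (height \<rho> v + 1)
                      \<and> sem \<rho> xs v b r'))))"
proof (rule exI[of _ 3], intro allI impI conjI ballI)
  fix n and \<rho> :: "'n cobdd" and vs :: "'n list" and bs :: "bool list"
  assume "is_cobdd n \<rho> \<and> reduced \<rho> \<and> set vs \<subseteq> nodes \<rho> \<and> length bs = length vs"
  then have cobdd: "is_cobdd n \<rho>" and vs: "set vs \<subseteq> nodes \<rho>" by auto
  then show "\<exists>prog W'. translate_all \<rho> vs {} prog W'"
    by (rule translate_all_exists)
  fix prog W' assume translated: "translate_all \<rho> vs {} prog W'"
  then show "length prog = card (\<Union>v \<in> set vs. reach \<rho> v)"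
    using translate_all_code(1,3)[OF _ cobdd vs] by simp
  fix v assume v: "v \<in> (\<Union>u \<in> set vs. reach \<rho> u)"
  then show "\<exists>j < length prog. fst (prog ! j) = v"
    using translate_all_label_exists[OF translated cobdd vs] by blast
  fix b xs arr assume "\<forall>j \<in> {1..n}. arr (j - 1) = (xs :: nat \<Rightarrow> bool) j"
  then show "\<exists>k r'. exec prog arr v (\<not> b) k r' \<and> k \<le> 3 * (height \<rho> v + 1) \<and> sem \<rho> xs v b r'"
    using translate_all_runs_within_height[OF translated cobdd vs v] by blast
qed

end
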